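(* Let $N\ge1$, $K>0$, $r_i>0$, let $(\mu_{ij})$ be a nonnegative, symmetric, irreducible $N\times N$ matrix, and let $\Psi_1,\dots,\Psi_N:\mathbb{R}^N\to\mathbb{R}$ be locally Lipschitz, with $\Psi_i(0)=0$, monotone increasing for the componentwise order, and such that for each $i$ there exist positive $R_i,k_i,c_i$ with $c_i(\sum_jv_j)^{k_i}\le\Psi_i(v)$ for all $v\in[0,\infty)^N$ with $\sum_j|v_j|\ge R_i$. Let $v$ be a positive solution and $\bar v$ a positive stationary solution of $$\frac{dv_i}{dt}=v_i\left[r_i-\frac{1}{K}\Psi_i(v)\right]+\sum_{j=1}^N\mu_{ij}(v_j-v_i),\qquad i=1,\dots,N.$$ Then (i) $\displaystyle\frac{d}{dt}\left(\sum_{i=1}^Nv_i\bar v_i\right)=\frac1K\sum_{i=1}^N(\Psi_i(\bar v)-\Psi_i(v))v_i\bar v_i$; (ii) $\displaystyle\frac{d}{dt}\left(\sum_{i=1}^Nv_i^2\right)=-\sum_{i,j=1}^N\mu_{ij}\bar v_i\bar v_j\left(\frac{v_i}{\bar v_i}-\frac{v_j}{\bar v_j}\right)^2+\frac2K\sum_{i=1}^Nv_i^2\left(\Psi_i(\bar v)-\Psi_i(v)\right)$.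
   Context: Positive means all components strictly positive; a stationary solution is a vector at which the right-hand side vanishes for every $i$. *)

theory Defs
  imports "HOL-Analysis.Analysis"
begin

definition locally_lipschitz :: "('a::metric_space \<Rightarrow> 'b::metric_space) \<Rightarrow> bool" where
  "locally_lipschitz f \<longleftrightarrow> (\<forall>x. \<exists>e>0. \<exists>L. L-lipschitz_on (ball x e) f)"

text \<open>Irreducible nonnegative matrix: the directed graph with an edge i to j
  whenever mu i j > 0 is strongly connected.\<close>
definition irreducible_matrix :: "('n::finite \<Rightarrow> 'n \<Rightarrow> real) \<Rightarrow> bool" where
  "irreducible_matrix mu \<longleftrightarrow> (\<forall>i j. (i, j) \<in> {(a, b). mu a b > 0}\<^sup>*)"

definition rhs :: "real \<Rightarrow> ('n::finite \<Rightarrow> real) \<Rightarrow> ('n \<Rightarrow> 'n \<Rightarrow> real)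
     \<Rightarrow> ('n \<Rightarrow> real^'n \<Rightarrow> real) \<Rightarrow> real^'n \<Rightarrow> real^'n" where
  "rhs K r mu Psi v = (\<chi> i. v$i * (r i - Psi i v / K) + (\<Sum>j\<in>UNIV. mu i j * (v$j - v$i)))"

end

theory Submission
  imports Defs
begin

text \<open>Both identities come from pairing the equation with the stationary equation for \<open>vbar\<close>:
  stationarity eliminates the growth rates \<open>r i\<close>, and symmetry of \<open>mu\<close> makes the diffusion
  operator self-adjoint, which cancels the diffusion terms in (i) and turns them into a weighted
  Dirichlet form in (ii).\<close>

definition diffusion :: "('n::finite \<Rightarrow> 'n \<Rightarrow> real) \<Rightarrow> ('n \<Rightarrow> real) \<Rightarrow> 'n \<Rightarrow> real" where
  "diffusion mu a i = (\<Sum>j\<in>UNIV. mu i j * (a j - a i))"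

lemma rhs_nth: "rhs K r mu Psi u $ i = u $ i * (r i - Psi i u / K) + diffusion mu (($) u) i"
  by (simp add: rhs_def diffusion_def)

lemma stationary_growth_rate:
  assumes "rhs K r mu Psi vbar = 0"
  shows "vbar $ i * (r i - Psi i vbar / K) = - diffusion mu (($) vbar) i"
  using arg_cong[OF assms, of "\<lambda>w. w $ i"] by (simp add: rhs_nth eq_neg_iff_add_eq_0)

lemma double_sum_swap_symmetric:
  fixes mu :: "'n::finite \<Rightarrow> 'n \<Rightarrow> real"
  assumes "\<forall>i j. mu i j = mu j i"
  shows "(\<Sum>i\<in>UNIV. \<Sum>j\<in>UNIV. mu i j * f i j) = (\<Sum>i\<in>UNIV. \<Sum>j\<in>UNIV. mu i j * f j i)"
  using sum.swap[of "\<lambda>i j. mu i j * f i j" UNIV UNIV] assms by simp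

lemma diffusion_self_adjoint:
  assumes "\<forall>i j. mu i j = mu j i"
  shows "(\<Sum>i\<in>UNIV. b i * diffusion mu a i) = (\<Sum>i\<in>UNIV. a i * diffusion mu b i)"
proof -
  have "(\<Sum>i\<in>UNIV. b i * diffusion mu a i) - (\<Sum>i\<in>UNIV. a i * diffusion mu b i)
      = (\<Sum>i\<in>UNIV. \<Sum>j\<in>UNIV. mu i j * (b i * a j)) - (\<Sum>i\<in>UNIV. \<Sum>j\<in>UNIV. mu i j * (a i * b j))"
    by (simp add: diffusion_def sum_distrib_left sum_subtractf[symmetric] algebra_simps)
  also have "\<dots> = 0"
    using double_sum_swap_symmetric[OF assms, of "\<lambda>i j. a i * b j"] by (simp add: mult.commute)
  finally show ?thesis by simp
qed

lemma diffusion_weighted_dirichlet_form: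
  assumes "\<forall>i j. mu i j = mu j i" and "\<forall>i. b i \<noteq> 0"
  shows "2 * (\<Sum>i\<in>UNIV. a i * diffusion mu a i - (a i)^2 / b i * diffusion mu b i)
       = - (\<Sum>i\<in>UNIV. \<Sum>j\<in>UNIV. mu i j * b i * b j * (a i / b i - a j / b j)^2)"
proof -
  let ?cross = "\<Sum>i\<in>UNIV. \<Sum>j\<in>UNIV. mu i j * (a i * a j)"
  let ?weighted = "\<Sum>i\<in>UNIV. \<Sum>j\<in>UNIV. mu i j * ((a i)^2 * b j / b i)"
  have "(\<Sum>i\<in>UNIV. a i * diffusion mu a i - (a i)^2 / b i * diffusion mu b i)
      = (\<Sum>i\<in>UNIV. \<Sum>j\<in>UNIV. mu i j * (a i * a j - (a i)^2 * b j / b i))"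
    using assms(2)
    by (intro sum.cong refl)
       (simp add: diffusion_def sum_distrib_left sum_subtractf[symmetric] field_simps power2_eq_square)
  also have "\<dots> = ?cross - ?weighted"
    by (simp only: right_diff_distrib sum_subtractf)
  finally have lhs: "(\<Sum>i\<in>UNIV. a i * diffusion mu a i - (a i)^2 / b i * diffusion mu b i)
      = ?cross - ?weighted" .
  have square: "mu i j * b i * b j * (a i / b i - a j / b j)^2
      = mu i j * ((a i)^2 * b j / b i) + mu i j * ((a j)^2 * b i / b j) - 2 * (mu i j * (a i * a j))"
    for i j using assms(2) by (simp add: field_simps power2_eq_square)
  have "(\<Sum>i\<in>UNIV. \<Sum>j\<in>UNIV. mu i j * b i * b j * (a i / b i - a j / b j)^2)
      = ?weighted + (\<Sum>i\<in>UNIV. \<Sum>j\<in>UNIV. mu i j * ((a j)^2 * b i / b j)) - 2 * ?cross"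
    unfolding square by (simp only: sum.distrib sum_subtractf sum_distrib_left)
  also have "\<dots> = 2 * ?weighted - 2 * ?cross"
    using double_sum_swap_symmetric[OF assms(1), of "\<lambda>i j. (a i)^2 * b j / b i"] by simp
  finally show ?thesis using lhs by simp
qed

lemma rhs_pairing_stationary:
  assumes "\<forall>i j. mu i j = mu j i" and "K \<noteq> 0" and "rhs K r mu Psi vbar = 0"
  shows "(\<Sum>i\<in>UNIV. rhs K r mu Psi u $ i * vbar $ i)
       = (1 / K) * (\<Sum>i\<in>UNIV. (Psi i vbar - Psi i u) * u $ i * vbar $ i)"
proof -
  have "rhs K r mu Psi u $ i * vbar $ i
      = (1 / K) * ((Psi i vbar - Psi i u) * u $ i * vbar $ i)
        + (vbar $ i * diffusion mu (($) u) i - u $ i * diffusion mu (($) vbar) i)" for i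
  proof -
    have "u $ i * (vbar $ i * (r i - Psi i vbar / K)) = - u $ i * diffusion mu (($) vbar) i"
      using stationary_growth_rate[OF assms(3), of i] by simp
    then show ?thesis using assms(2) by (simp add: rhs_nth field_simps)
  qed
  then show ?thesis
    using diffusion_self_adjoint[OF assms(1), of "($) vbar" "($) u"]
    by (simp add: sum.distrib sum_subtractf sum_distrib_left)
qed

lemma rhs_energy_stationary:
  assumes "\<forall>i j. mu i j = mu j i" and "K \<noteq> 0" and "rhs K r mu Psi vbar = 0"
    and "\<forall>i. vbar $ i \<noteq> 0"
  shows "(\<Sum>i\<in>UNIV. 2 * u $ i * rhs K r mu Psi u $ i)
       = - (\<Sum>i\<in>UNIV. \<Sum>j\<in>UNIV. mu i j * vbar $ i * vbar $ j *
              (u $ i / vbar $ i - u $ j / vbar $ j)^2)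
         + (2 / K) * (\<Sum>i\<in>UNIV. (u $ i)^2 * (Psi i vbar - Psi i u))"
proof -
  have growth_rate: "r i = Psi i vbar / K - diffusion mu (($) vbar) i / vbar $ i" for i
    using stationary_growth_rate[OF assms(3), of i] assms(4) by (simp add: field_simps)
  have "2 * u $ i * rhs K r mu Psi u $ i
      = (2 / K) * ((u $ i)^2 * (Psi i vbar - Psi i u))
        + 2 * (u $ i * diffusion mu (($) u) i - (u $ i)^2 / vbar $ i * diffusion mu (($) vbar) i)"
    for i unfolding rhs_nth growth_rate by (simp add: algebra_simps power2_eq_square)
  then show ?thesis
    using diffusion_weighted_dirichlet_form[OF assms(1), of "($) vbar" "($) u"] assms(4)
    by (simp add: sum.distrib sum_distrib_left)
qed

lemma has_real_derivative_vec_nth: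
  assumes "(v has_vector_derivative v') F"
  shows "((\<lambda>s. v s $ i) has_real_derivative v' $ i) F"
  using bounded_linear.has_vector_derivative[OF bounded_linear_vec_nth assms]
  by (simp add: has_real_derivative_iff_has_vector_derivative)

theorem lemma3p2:
  fixes K :: real and r :: "'n::finite \<Rightarrow> real" and mu :: "'n \<Rightarrow> 'n \<Rightarrow> real"
    and Psi :: "'n \<Rightarrow> real^'n \<Rightarrow> real"
    and T :: "real set" and v :: "real \<Rightarrow> real^'n" and vbar :: "real^'n"
  assumes K_pos: "K > 0"
    and r_pos: "\<forall>i. r i > 0"
    and mu_nonneg: "\<forall>i j. mu i j \<ge> 0"
    and mu_sym: "\<forall>i j. mu i j = mu j i"
    and mu_irred: "irreducible_matrix mu"
    and Psi_lip: "\<forall>i. locally_lipschitz (Psi i)"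
    and Psi_zero: "\<forall>i. Psi i 0 = 0"
    and Psi_mono: "\<forall>i u w. (\<forall>j. u$j \<le> w$j) \<longrightarrow> Psi i u \<le> Psi i w"
    and Psi_growth: "\<forall>i. \<exists>R k c. R > 0 \<and> k > 0 \<and> c > 0 \<and>
        (\<forall>w. (\<forall>j. w$j \<ge> 0) \<and> (\<Sum>j\<in>UNIV. \<bar>w$j\<bar>) \<ge> R
             \<longrightarrow> c * (\<Sum>j\<in>UNIV. w$j) powr k \<le> Psi i w)"
    and T_int: "is_interval T"
    and v_sol: "\<forall>t\<in>T. (v has_vector_derivative rhs K r mu Psi (v t)) (at t within T)"
    and v_pos: "\<forall>t\<in>T. \<forall>i. v t $ i > 0"
    and vbar_pos: "\<forall>i. vbar $ i > 0"
    and vbar_stat: "rhs K r mu Psi vbar = 0"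
    and t_in: "t \<in> T"
  shows "((\<lambda>s. \<Sum>i\<in>UNIV. v s $ i * vbar $ i) has_real_derivative
            (1 / K) * (\<Sum>i\<in>UNIV. (Psi i vbar - Psi i (v t)) * v t $ i * vbar $ i)) (at t within T)
      \<and> ((\<lambda>s. \<Sum>i\<in>UNIV. (v s $ i)^2) has_real_derivative
            - (\<Sum>i\<in>UNIV. \<Sum>j\<in>UNIV. mu i j * vbar $ i * vbar $ j *
                  (v t $ i / vbar $ i - v t $ j / vbar $ j)^2)
            + (2 / K) * (\<Sum>i\<in>UNIV. (v t $ i)^2 * (Psi i vbar - Psi i (v t)))) (at t within T)"
proof -
  let ?f = "rhs K r mu Psi (v t)"
  have component: "((\<lambda>s. v s $ i) has_real_derivative ?f $ i) (at t within T)" for i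
    using has_real_derivative_vec_nth v_sol t_in by blast
  have vbar_nonzero: "\<forall>i. vbar $ i \<noteq> 0"
    using vbar_pos by (metis less_irrefl)
  have "((\<lambda>s. \<Sum>i\<in>UNIV. v s $ i * vbar $ i) has_real_derivative
          (\<Sum>i\<in>UNIV. ?f $ i * vbar $ i)) (at t within T)"
    by (intro DERIV_sum DERIV_mult[OF component DERIV_const, simplified])
  moreover have "((\<lambda>s. \<Sum>i\<in>UNIV. (v s $ i)^2) has_real_derivative
          (\<Sum>i\<in>UNIV. 2 * v t $ i * ?f $ i)) (at t within T)"
    by (intro DERIV_sum) (use DERIV_power[OF component, of _ 2] in \<open>simp add: ac_simps\<close>)
  ultimately show ?thesis
    using K_pos rhs_pairing_stationary[OF mu_sym _ vbar_stat, of "v t"]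
      rhs_energy_stationary[OF mu_sym _ vbar_stat vbar_nonzero, of "v t"]
    by simp
qed

end
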